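(* Let $q\in(0,1/2]$, $k>0$, $D>0$, and let $(\bar u,\bar z)$ be a weak-detonation profile as described in the context, with $0\le u_+<u_{\mathrm{ig}}<u_-<1$, so that $\bar u$ is non-increasing (Proposition 2.3) and $0\le \bar u\le 1$, $0\le\bar z\le1$. Define \[ L:=\sup_{x\in\mathbb{R}}\varphi'(\bar u(x))\bar z(x),\qquad M:=\sup_{x\in\mathbb{R}}\Big((1+q)\varphi'(\bar u(x))\bar z(x)-\varphi(\bar u(x))\Big), \] and assume $L>0$. Suppose $\lambda\in\mathbb{C}$ with $\operatorname{Re}\lambda\ge0$ is an eigenvalue of the integrated eigenvalue problem \begin{align*} \lambda w-(1-\bar u)w'&=q\bar u\,z+q(D-1)z'+w'',\\ \lambda z+k\big(\varphi(\bar u)-q\varphi'(\bar u)\bar z\big)z&=z'+k\varphi'(\bar u)\bar z\,w'+Dz'', \end{align*} i.e. there is a nontrivial solution $(w,z)\in H^2(\mathbb{R})\times H^2(\mathbb{R})$. Then \[ \operatorname{Re}\lambda+|\operatorname{Im}\lambda|\le\max\Big\{3,\ \frac{1}{4D}+\Big(\frac14+\frac12|D-1|^2\Big)kL+kM\Big\}. \]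
   Context: Setting: the rescaled Majda model $u_t-u_x+(u^2/2)_x=u_{xx}+qk\varphi(u)z$, $z_t-z_x=Dz_{xx}-k\varphi(u)z$, with ignition function $\varphi(u)=0$ for $u\le u_{\mathrm{ig}}$, $\varphi(u)=e^{-E_A/(u-u_{\mathrm{ig}})}$ for $u>u_{\mathrm{ig}}$ ($E_A>0$). A weak-detonation profile is a steady solution $(\bar u,\bar z)(x)$ of this system (speed normalized to $1$) with $(\bar u,\bar z)\to(u_-,0)$ as $x\to-\infty$ and $(\bar u,\bar z)\to(u_+,1)$ as $x\to+\infty$, where $\tfrac12(u_+^2-u_-^2)=u_+-u_-+q$ and $u_\pm<1$. Here $'$ denotes $\mathrm d/\mathrm dx$, and the equations in $(w,z)$ are the linearized eigenvalue equations written in the integrated variable $w$ with $w'=u+qz$ ($u,z$ the perturbations). *)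

theory Defs
  imports "HOL-Analysis.Analysis"
begin

definition ign :: "real \<Rightarrow> real \<Rightarrow> real \<Rightarrow> real" where
  "ign EA uig u = (if u \<le> uig then 0 else exp (- EA / (u - uig)))"

text \<open>Weak-detonation profile (steady solution with speed 1) connecting
  (u_-,0) at minus infinity to (u_+,1) at plus infinity.\<close>
definition weak_det_profile ::
  "real \<Rightarrow> real \<Rightarrow> real \<Rightarrow> real \<Rightarrow> real \<Rightarrow> real \<Rightarrow> real \<Rightarrow>
   (real \<Rightarrow> real) \<Rightarrow> (real \<Rightarrow> real) \<Rightarrow> bool" where
  "weak_det_profile q k D EA uig um up ub zb \<longleftrightarrow>
     (\<exists>ub1 ub2 zb1 zb2.
        (\<forall>x. (ub has_real_derivative ub1 x) (at x)) \<and>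
        (\<forall>x. (ub1 has_real_derivative ub2 x) (at x)) \<and>
        (\<forall>x. (zb has_real_derivative zb1 x) (at x)) \<and>
        (\<forall>x. (zb1 has_real_derivative zb2 x) (at x)) \<and>
        (\<forall>x. - ub1 x + ub x * ub1 x = ub2 x + q * k * ign EA uig (ub x) * zb x) \<and>
        (\<forall>x. - zb1 x = D * zb2 x - k * ign EA uig (ub x) * zb x) \<and>
        (ub \<longlongrightarrow> um) at_bot \<and> (zb \<longlongrightarrow> 0) at_bot \<and>
        (ub \<longlongrightarrow> up) at_top \<and> (zb \<longlongrightarrow> 1) at_top)"

definition H2_with :: "(real \<Rightarrow> complex) \<Rightarrow> (real \<Rightarrow> complex) \<Rightarrow> (real \<Rightarrow> complex) \<Rightarrow> bool" where
  "H2_with f f1 f2 \<longleftrightarrow>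
     (\<forall>x. (f has_vector_derivative f1 x) (at x)) \<and>
     (\<forall>x. (f1 has_vector_derivative f2 x) (at x)) \<and>
     integrable lborel (\<lambda>x. (cmod (f x))\<^sup>2) \<and>
     integrable lborel (\<lambda>x. (cmod (f1 x))\<^sup>2) \<and>
     integrable lborel (\<lambda>x. (cmod (f2 x))\<^sup>2)"

end

theory Submission
  imports Defs "HOL-Real_Asymp.Real_Asymp"
begin

(* The bound is an energy estimate. Multiply the w-equation by cnj w and the z-equation
   by cnj z, integrate over the line and integrate by parts (all functions are in H^2):
     lam |w|^2 + |w'|^2 = <(1 - u) w', w> + <q u z, w> - q (D - 1) <z, w'>,
     lam |z|^2 + <k (phi(u) - q phi'(u) z_b) z, z> + D |z'|^2 = <z', z> + <k phi'(u) z_b w', z>,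
   where <z', z> is purely imaginary. With Re y + |Im y| <= sqrt 2 |y| and Young's inequality
   this gives, for s = Re lam + |Im lam| and c = 1/8 + |D - 1|^2 / 4,
     s |w|^2 + |w'|^2 <= 3/4 |w'|^2 + 3 |w|^2 + c |z|^2,
     s |z|^2 <= (k M + 1 / (4 D)) |z|^2 + k L / 2 |w'|^2.
   For s > 3 the first bound gives |w'|^2 <= 4 c |z|^2; inserted into the second, this
   forces z = 0 once s also exceeds k M + 1 / (4 D) + 2 c k L, and then w = 0.
   The pointwise facts 0 <= u <= 1 and z_b >= 0 about the profile used on the way come
   from maximum-principle arguments for the travelling-wave equations. *)

section \<open>Square-integrable functions on the real line\<close>

lemma borel_measurable_vector_derivative:
  fixes f :: "real \<Rightarrow> 'a::{real_normed_vector, second_countable_topology}"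
  assumes f': "\<And>x. (f has_vector_derivative f' x) (at x)"
  shows "f' \<in> borel_measurable borel"
proof (rule borel_measurable_LIMSEQ_metric)
  have "continuous_on UNIV f"
    using f' by (meson continuous_at_imp_continuous_on has_vector_derivative_continuous)
  then have [measurable]: "f \<in> borel_measurable borel"
    by (rule borel_measurable_continuous_onI)
  show "(\<lambda>x. real (Suc n) *\<^sub>R (f (x + inverse (real (Suc n))) - f x)) \<in> borel_measurable borel" for n
    by measurable
  fix x
  have "((\<lambda>h. norm (f (x + h) - f x - h *\<^sub>R f' x) / norm h) \<longlongrightarrow> 0) (at 0)"
    using f'[of x] by (simp add: has_vector_derivative_def has_derivative_at)
  moreover have "filterlim (\<lambda>n. inverse (real (Suc n))) (at 0) sequentially"
    unfolding filterlim_at using LIMSEQ_inverse_real_of_nat by simp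
  ultimately have "(\<lambda>n. norm (f (x + inverse (real (Suc n))) - f x - inverse (real (Suc n)) *\<^sub>R f' x)
      / norm (inverse (real (Suc n)))) \<longlonglongrightarrow> 0"
    by (rule filterlim_compose)
  moreover have "norm (f (x + inverse (real (Suc n))) - f x - inverse (real (Suc n)) *\<^sub>R f' x)
      / norm (inverse (real (Suc n))) = norm (real (Suc n) *\<^sub>R (f (x + inverse (real (Suc n))) - f x) - f' x)" for n
  proof -
    have "real (Suc n) *\<^sub>R (f (x + inverse (real (Suc n))) - f x) - f' x
        = real (Suc n) *\<^sub>R (f (x + inverse (real (Suc n))) - f x - inverse (real (Suc n)) *\<^sub>R f' x)"
      by (simp add: scaleR_diff_right)
    then show ?thesis by (simp add: divide_inverse_commute)
  qed
  ultimately show "(\<lambda>n. real (Suc n) *\<^sub>R (f (x + inverse (real (Suc n))) - f x)) \<longlonglongrightarrow> f' x"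
    by (simp add: tendsto_norm_zero_iff LIM_zero_iff)
qed

lemma set_integral_vector_derivative:
  fixes h p :: "real \<Rightarrow> 'a::euclidean_space"
  assumes h': "\<And>x. (h has_vector_derivative p x) (at x)" and p: "integrable lborel p" and "a \<le> b"
  shows "(LINT x:{a..b}|lborel. p x) = h b - h a"
proof -
  have "set_integrable lborel {a..b} p"
    unfolding set_integrable_def using p by (intro integrable_mult_indicator) auto
  then have "(LINT x:{a..b}|lborel. p x) = integral {a..b} p"
    by (rule set_borel_integral_eq_integral)
  also have "\<dots> = h b - h a"
    using fundamental_theorem_of_calculus[OF \<open>a \<le> b\<close>] h' has_vector_derivative_at_within
    by blast
  finally show ?thesis .
qed

lemma norm_le_set_integral_unit_interval:
  fixes h p :: "real \<Rightarrow> 'a::euclidean_space"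
  assumes h': "\<And>x. (h has_vector_derivative p x) (at x)"
    and h: "integrable lborel h" and p: "integrable lborel p"
  shows "norm (h a) \<le> (LINT x:{a..a+1}|lborel. norm (h x) + norm (p x))"
proof -
  let ?I = "\<lambda>S g. LINT x|lborel. indicat_real S x * g x"
  have int: "integrable lborel (\<lambda>x. indicat_real S x * g x)"
    if "S \<in> sets lborel" "integrable lborel g" for S and g :: "real \<Rightarrow> real"
    using integrable_mult_indicator[OF that] by simp
  have pt: "norm (h a) \<le> norm (h x) + ?I {a..a+1} (\<lambda>t. norm (p t))" if x: "x \<in> {a..a+1}" for x
  proof -
    have "norm (h x - h a) = norm (LINT t:{a..x}|lborel. p t)"
      using set_integral_vector_derivative[OF h' p] x by simp
    also have "\<dots> \<le> ?I {a..x} (\<lambda>t. norm (p t))"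
      using integral_norm_bound[of lborel "\<lambda>t. indicator {a..x} t *\<^sub>R p t"]
      by (simp add: set_lebesgue_integral_def)
    also have "\<dots> \<le> ?I {a..a+1} (\<lambda>t. norm (p t))"
      using x p by (intro integral_mono int) (auto simp: indicator_def)
    finally show ?thesis
      using norm_triangle_ineq2[of "h a" "h x"] by (simp add: norm_minus_commute)
  qed
  let ?P = "?I {a..a+1} (\<lambda>t. norm (p t))"
  have const: "integrable lborel (\<lambda>x. indicat_real {a..a+1} x * c)" for c
    by (intro integrable_mult_left integrable_real_indicator) auto
  have ih: "integrable lborel (\<lambda>x. indicat_real {a..a+1} x * norm (h x))"
    using h by (intro int) auto
  have ip: "integrable lborel (\<lambda>x. indicat_real {a..a+1} x * norm (p x))"
    using p by (intro int) auto
  have "norm (h a) = ?I {a..a+1} (\<lambda>_. norm (h a))"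
    by simp
  also have "\<dots> \<le> (LINT x|lborel. indicat_real {a..a+1} x * norm (h x) + indicat_real {a..a+1} x * ?P)"
    using pt by (intro integral_mono const Bochner_Integration.integrable_add ih)
      (auto simp: indicator_def)
  also have "\<dots> = ?I {a..a+1} (\<lambda>x. norm (h x)) + ?P"
    using ih const by simp
  also have "\<dots> = ?I {a..a+1} (\<lambda>x. norm (h x) + norm (p x))"
    using ih ip by (simp add: distrib_left)
  finally show ?thesis by (simp add: set_lebesgue_integral_def)
qed

lemma set_integral_unit_interval_tendsto_0:
  fixes g c :: "real \<Rightarrow> real"
  assumes g: "integrable lborel g" and c: "filterlim (\<lambda>t. \<bar>c t\<bar>) at_top at_top"
  shows "((\<lambda>t. LINT x:{c t..c t+1}|lborel. g x) \<longlongrightarrow> 0) at_top"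
proof -
  have [measurable]: "g \<in> borel_measurable lborel"
    using g by simp
  have "AE x in lborel. ((\<lambda>t. indicator {c t..c t+1} x *\<^sub>R g x) \<longlongrightarrow> 0) at_top"
  proof (rule AE_I2, rule tendsto_eventually)
    fix x
    have "\<forall>\<^sub>F t in at_top. \<bar>x\<bar> + 1 < \<bar>c t\<bar>"
      using c unfolding filterlim_at_top_dense by blast
    then show "\<forall>\<^sub>F t in at_top. indicator {c t..c t+1} x *\<^sub>R g x = 0"
      by eventually_elim (auto simp: indicator_def abs_if split: if_splits)
  qed
  moreover have "\<forall>\<^sub>F t in at_top. AE x in lborel. norm (indicator {c t..c t+1} x *\<^sub>R g x) \<le> \<bar>g x\<bar>"
    by (intro always_eventually allI AE_I2) (simp add: indicator_def)
  ultimately have "((\<lambda>t. LINT x|lborel. indicator {c t..c t+1} x *\<^sub>R g x) \<longlongrightarrow> (LINT (x::real)|lborel. 0)) at_top"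
    using g by (intro integral_dominated_convergence_at_top) auto
  then show ?thesis
    by (simp add: set_lebesgue_integral_def)
qed

lemma tendsto_0_if_integrable_with_derivative:
  fixes h p :: "real \<Rightarrow> 'a::euclidean_space" and c :: "real \<Rightarrow> real"
  assumes h': "\<And>x. (h has_vector_derivative p x) (at x)"
    and h: "integrable lborel h" and p: "integrable lborel p"
    and c: "filterlim (\<lambda>t. \<bar>c t\<bar>) at_top at_top"
  shows "((\<lambda>t. h (c t)) \<longlongrightarrow> 0) at_top"
proof (rule Lim_null_comparison)
  show "\<forall>\<^sub>F t in at_top. norm (h (c t)) \<le> (LINT x:{c t..c t+1}|lborel. norm (h x) + norm (p x))"
    using norm_le_set_integral_unit_interval[OF h' h p] by simp
  show "((\<lambda>t. LINT x:{c t..c t+1}|lborel. norm (h x) + norm (p x)) \<longlongrightarrow> 0) at_top"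
    by (rule set_integral_unit_interval_tendsto_0[OF _ c]) (use h p in auto)
qed

lemma integral_eq_0_if_integrable_with_derivative:
  fixes h p :: "real \<Rightarrow> 'a::euclidean_space"
  assumes h': "\<And>x. (h has_vector_derivative p x) (at x)"
    and h: "integrable lborel h" and p: "integrable lborel p"
  shows "(LINT x|lborel. p x) = 0"
proof -
  have "AE x in lborel. ((\<lambda>t. indicator {-t..t} x *\<^sub>R p x) \<longlongrightarrow> p x) at_top"
  proof (rule AE_I2, rule tendsto_eventually)
    fix x
    show "\<forall>\<^sub>F t in at_top. indicator {-t..t} x *\<^sub>R p x = p x"
      using eventually_ge_at_top[of "\<bar>x\<bar>"] by eventually_elim (auto simp: indicator_def)
  qed
  moreover have "\<forall>\<^sub>F t in at_top. AE x in lborel. norm (indicator {-t..t} x *\<^sub>R p x) \<le> norm (p x)"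
    by (intro always_eventually allI AE_I2) (simp add: indicator_def)
  ultimately have "((\<lambda>t. LINT x:{-t..t}|lborel. p x) \<longlongrightarrow> (LINT x|lborel. p x)) at_top"
    unfolding set_lebesgue_integral_def using p by (intro integral_dominated_convergence_at_top) auto
  moreover have "((\<lambda>t. LINT x:{-t..t}|lborel. p x) \<longlongrightarrow> 0) at_top"
  proof (rule Lim_transform_eventually)
    have "((\<lambda>t. h t - h (-t)) \<longlongrightarrow> 0 - 0) at_top"
      using filterlim_abs_real
      by (intro tendsto_diff tendsto_0_if_integrable_with_derivative[OF h' h p]) auto
    then show "((\<lambda>t. h t - h (-t)) \<longlongrightarrow> 0) at_top" by simp
    show "\<forall>\<^sub>F t in at_top. h t - h (-t) = (LINT x:{-t..t}|lborel. p x)"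
      using eventually_ge_at_top[of 0]
      by eventually_elim (simp add: set_integral_vector_derivative[OF h' p])
  qed
  ultimately show ?thesis
    by (rule tendsto_unique[OF trivial_limit_at_top_linorder])
qed

lemma borel_measurable_cnj [measurable]:
  "f \<in> borel_measurable M \<Longrightarrow> (\<lambda>x. cnj (f x)) \<in> borel_measurable M"
  by (intro borel_measurable_continuous_on[where f=cnj] continuous_intros)

lemma integrable_bounded_mult_cnj_L2:
  fixes f g :: "real \<Rightarrow> complex" and c :: "real \<Rightarrow> real"
  assumes [measurable]: "f \<in> borel_measurable lborel" "g \<in> borel_measurable lborel" "c \<in> borel_measurable lborel"
    and c: "\<And>x. \<bar>c x\<bar> \<le> C"
    and f: "integrable lborel (\<lambda>x. (cmod (f x))\<^sup>2)" and g: "integrable lborel (\<lambda>x. (cmod (g x))\<^sup>2)"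
  shows "integrable lborel (\<lambda>x. of_real (c x) * f x * cnj (g x))"
proof (rule Bochner_Integration.integrable_bound)
  show "integrable lborel (\<lambda>x. C * ((cmod (f x))\<^sup>2 + (cmod (g x))\<^sup>2) / 2)"
    using f g by auto
  show "AE x in lborel. norm (of_real (c x) * f x * cnj (g x)) \<le> norm (C * ((cmod (f x))\<^sup>2 + (cmod (g x))\<^sup>2) / 2)"
  proof (rule AE_I2)
    fix x
    have "cmod (f x) * cmod (g x) \<le> ((cmod (f x))\<^sup>2 + (cmod (g x))\<^sup>2) / 2"
      using sum_squares_bound[of "cmod (f x)" "cmod (g x)"] by (simp add: power2_eq_square)
    then have "\<bar>c x\<bar> * (cmod (f x) * cmod (g x)) \<le> C * (((cmod (f x))\<^sup>2 + (cmod (g x))\<^sup>2) / 2)"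
      using c[of x] by (intro mult_mono) auto
    then have "norm (of_real (c x) * f x * cnj (g x)) \<le> C * ((cmod (f x))\<^sup>2 + (cmod (g x))\<^sup>2) / 2"
      by (simp add: norm_mult mult.assoc)
    then show "norm (of_real (c x) * f x * cnj (g x)) \<le> norm (C * ((cmod (f x))\<^sup>2 + (cmod (g x))\<^sup>2) / 2)"
      by simp
  qed
qed measurable

lemma integrable_mult_cnj_L2:
  fixes f g :: "real \<Rightarrow> complex"
  assumes "f \<in> borel_measurable lborel" "g \<in> borel_measurable lborel"
    and "integrable lborel (\<lambda>x. (cmod (f x))\<^sup>2)" "integrable lborel (\<lambda>x. (cmod (g x))\<^sup>2)"
  shows "integrable lborel (\<lambda>x. f x * cnj (g x))"
  using integrable_bounded_mult_cnj_L2[OF assms(1,2) _ _ assms(3,4), of "\<lambda>_. 1" 1] by simp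

lemma H2_withD:
  assumes "H2_with f f1 f2"
  shows "\<And>x. (f has_vector_derivative f1 x) (at x)" "\<And>x. (f1 has_vector_derivative f2 x) (at x)"
    and "integrable lborel (\<lambda>x. (cmod (f x))\<^sup>2)" "integrable lborel (\<lambda>x. (cmod (f1 x))\<^sup>2)"
      "integrable lborel (\<lambda>x. (cmod (f2 x))\<^sup>2)"
    and "continuous_on UNIV f"
    and "f \<in> borel_measurable lborel" "f1 \<in> borel_measurable lborel" "f2 \<in> borel_measurable lborel"
proof -
  show f': "\<And>x. (f has_vector_derivative f1 x) (at x)" and f'': "\<And>x. (f1 has_vector_derivative f2 x) (at x)"
    and "integrable lborel (\<lambda>x. (cmod (f x))\<^sup>2)" "integrable lborel (\<lambda>x. (cmod (f1 x))\<^sup>2)"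
      "integrable lborel (\<lambda>x. (cmod (f2 x))\<^sup>2)"
    using assms unfolding H2_with_def by auto
  show c: "continuous_on UNIV f"
    using f' by (meson continuous_at_imp_continuous_on has_vector_derivative_continuous)
  then show "f \<in> borel_measurable lborel"
    by (simp add: borel_measurable_continuous_onI)
  show "f1 \<in> borel_measurable lborel" "f2 \<in> borel_measurable lborel"
    using borel_measurable_vector_derivative f' f'' by auto
qed

lemma integral_mult_cnj_self:
  fixes f :: "real \<Rightarrow> complex"
  shows "(LINT x|lborel. f x * cnj (f x)) = of_real (LINT x|lborel. (cmod (f x))\<^sup>2)"
  by (simp only: complex_norm_square[symmetric] integral_complex_of_real)

lemma integration_by_parts_L2:
  fixes f f' g g' :: "real \<Rightarrow> complex"
  assumes f': "\<And>x. (f has_vector_derivative f' x) (at x)"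
    and g': "\<And>x. (g has_vector_derivative g' x) (at x)"
    and L2: "integrable lborel (\<lambda>x. (cmod (f x))\<^sup>2)" "integrable lborel (\<lambda>x. (cmod (f' x))\<^sup>2)"
      "integrable lborel (\<lambda>x. (cmod (g x))\<^sup>2)" "integrable lborel (\<lambda>x. (cmod (g' x))\<^sup>2)"
  shows "(LINT x|lborel. f' x * cnj (g x)) = - (LINT x|lborel. f x * cnj (g' x))"
proof -
  have "continuous_on UNIV f" "continuous_on UNIV g"
    using f' g' by (meson continuous_at_imp_continuous_on has_vector_derivative_continuous)+
  then have [measurable]: "f \<in> borel_measurable lborel" "g \<in> borel_measurable lborel"
    by (simp_all add: borel_measurable_continuous_onI)
  have [measurable]: "f' \<in> borel_measurable lborel" "g' \<in> borel_measurable lborel"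
    using borel_measurable_vector_derivative f' g' by auto
  have int: "integrable lborel (\<lambda>x. f x * cnj (g x))" "integrable lborel (\<lambda>x. f' x * cnj (g x))"
      "integrable lborel (\<lambda>x. f x * cnj (g' x))"
    by (intro integrable_mult_cnj_L2 L2; measurable)+
  have "((\<lambda>x. f x * cnj (g x)) has_vector_derivative f x * cnj (g' x) + f' x * cnj (g x)) (at x)" for x
    by (intro derivative_intros f' g')
  then have "(LINT x|lborel. f x * cnj (g' x) + f' x * cnj (g x)) = 0"
    by (rule integral_eq_0_if_integrable_with_derivative) (use int in auto)
  then show ?thesis
    using int by (simp add: add_eq_0_iff)
qed

lemma Re_integral_derivative_mult_cnj:
  fixes f f' :: "real \<Rightarrow> complex"
  assumes f': "\<And>x. (f has_vector_derivative f' x) (at x)"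
    and L2: "integrable lborel (\<lambda>x. (cmod (f x))\<^sup>2)" "integrable lborel (\<lambda>x. (cmod (f' x))\<^sup>2)"
  shows "Re (LINT x|lborel. f' x * cnj (f x)) = 0"
proof -
  define T where "T = (LINT x|lborel. f' x * cnj (f x))"
  have "T = - (LINT x|lborel. cnj (f' x * cnj (f x)))"
    unfolding T_def using integration_by_parts_L2[OF f' f' L2 L2] by (simp add: mult.commute)
  also have "(LINT x|lborel. cnj (f' x * cnj (f x))) = cnj T"
    unfolding T_def by (rule Bochner_Integration.integral_cnj)
  finally have "T = - cnj T" .
  then have "Re T = Re (- cnj T)"
    by (rule arg_cong)
  then show ?thesis
    unfolding T_def[symmetric] by simp
qed

lemma H2_with_integral_second_derivative_mult_cnj:
  assumes "H2_with f f1 f2"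
  shows "(LINT x|lborel. f2 x * cnj (f x)) = - of_real (LINT x|lborel. (cmod (f1 x))\<^sup>2)"
  using integration_by_parts_L2[OF H2_withD(2,1,4,5,3,4)[OF assms]] integral_mult_cnj_self by simp

abbreviation L2_norm_sq :: "(real \<Rightarrow> complex) \<Rightarrow> real" where
  "L2_norm_sq f \<equiv> LINT x|lborel. (cmod (f x))\<^sup>2"

lemma L2_norm_sq_eq_0_imp_eq_0:
  fixes f :: "real \<Rightarrow> complex"
  assumes f: "continuous_on UNIV f" and L2: "integrable lborel (\<lambda>x. (cmod (f x))\<^sup>2)"
    and zero: "L2_norm_sq f = 0"
  shows "f x = 0"
proof -
  have "AE x in lborel. (cmod (f x))\<^sup>2 = 0"
    using integral_nonneg_eq_0_iff_AE[OF L2] zero by simp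
  then have "AE x in lebesgue. x \<in> {x. f x = 0}"
    by (auto intro: AE_completion)
  moreover have "closed {x. f x = 0}"
    using f by (intro closed_Collect_eq continuous_intros) auto
  ultimately show ?thesis
    using mem_closed_if_AE_lebesgue by blast
qed

section \<open>The ignition function\<close>

definition ign_deriv :: "real \<Rightarrow> real \<Rightarrow> real \<Rightarrow> real" where
  "ign_deriv EA uig u = (if u \<le> uig then 0 else EA / (u - uig)\<^sup>2 * exp (- EA / (u - uig)))"

lemma has_real_derivative_ign:
  assumes EA: "EA > 0"
  shows "(ign EA uig has_real_derivative ign_deriv EA uig u) (at u)"
proof (cases u uig rule: linorder_cases)
  case less
  have "((\<lambda>_. 0) has_real_derivative 0) (at u)"
    by simp
  then show ?thesis
    using has_field_derivative_transform_within_open[of "\<lambda>_. 0" 0 u "{..<uig}" "ign EA uig"] less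
    by (simp add: ign_def ign_deriv_def)
next
  case greater
  have "((\<lambda>v. exp (- EA / (v - uig))) has_real_derivative ign_deriv EA uig u) (at u)"
    using greater by (auto intro!: derivative_eq_intros simp: ign_deriv_def power2_eq_square field_simps)
  then show ?thesis
    using has_field_derivative_transform_within_open[of "\<lambda>v. exp (- EA / (v - uig))" _ u "{uig<..}" "ign EA uig"]
      greater
    by (simp add: ign_def)
next
  case equal
  have left: "((\<lambda>v. (ign EA uig v - ign EA uig u) / (v - u)) \<longlongrightarrow> 0) (at_left u)"
  proof (rule tendsto_eventually)
    show "\<forall>\<^sub>F v in at_left u. (ign EA uig v - ign EA uig u) / (v - u) = 0"
      unfolding eventually_at_left_field by (rule exI[of _ "u - 1"]) (simp add: ign_def equal)
  qed
  have "((\<lambda>t. exp (- EA / t) / t) \<longlongrightarrow> 0) (at_right 0)"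
    using EA by real_asymp
  then have "((\<lambda>v. exp (- EA / (v - u)) / (v - u)) \<longlongrightarrow> 0) (at_right u)"
    by (subst filterlim_at_right_to_0) simp
  then have right: "((\<lambda>v. (ign EA uig v - ign EA uig u) / (v - u)) \<longlongrightarrow> 0) (at_right u)"
  proof (rule Lim_transform_eventually)
    show "\<forall>\<^sub>F v in at_right u. exp (- EA / (v - u)) / (v - u) = (ign EA uig v - ign EA uig u) / (v - u)"
      unfolding eventually_at_right_field by (rule exI[of _ "u + 1"]) (simp add: ign_def equal)
  qed
  show ?thesis
    using filterlim_split_at[OF left right] equal
    by (simp add: has_field_derivative_iff ign_deriv_def)
qed

lemma deriv_ign:
  assumes "EA > 0"
  shows "deriv (ign EA uig) = ign_deriv EA uig"
proof
  show "deriv (ign EA uig) u = ign_deriv EA uig u" for u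
    using has_real_derivative_ign[OF assms] by (rule DERIV_imp_deriv)
qed

lemma ign_nonneg: "0 \<le> ign EA uig u"
  by (simp add: ign_def)

lemma ign_le_1: "EA > 0 \<Longrightarrow> ign EA uig u \<le> 1"
  by (simp add: ign_def)

lemma ign_deriv_nonneg: "EA > 0 \<Longrightarrow> 0 \<le> ign_deriv EA uig u"
  by (simp add: ign_deriv_def)

lemma ign_deriv_le:
  assumes EA: "EA > 0"
  shows "ign_deriv EA uig u \<le> 4 / EA"
proof (cases "u \<le> uig")
  case False
  define t where "t = u - uig"
  define s where "s = EA / t"
  have t: "t > 0" and s: "s > 0"
    using False EA by (simp_all add: t_def s_def)
  have "s / 2 \<le> exp (s / 2)"
    using exp_ge_add_one_self[of "s / 2"] by linarith
  then have "(s / 2)\<^sup>2 \<le> (exp (s / 2))\<^sup>2"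
    using s by (intro power_mono) auto
  then have "s\<^sup>2 \<le> 4 * exp s"
    by (simp add: power2_eq_square field_simps flip: exp_add)
  then have "s\<^sup>2 / exp s \<le> 4"
    by (subst pos_divide_le_eq[OF exp_gt_zero])
  then have "s\<^sup>2 / exp s / EA \<le> 4 / EA"
    by (rule divide_right_mono) (use EA in simp)
  moreover have "ign_deriv EA uig u = s\<^sup>2 / exp s / EA"
    using False t EA by (simp add: ign_deriv_def t_def[symmetric] s_def power2_eq_square exp_minus field_simps)
  ultimately show ?thesis
    by simp
qed (use EA in \<open>simp add: ign_deriv_def\<close>)

lemma borel_measurable_ign [measurable]: "ign EA uig \<in> borel_measurable borel"
  unfolding ign_def by measurable

lemma borel_measurable_ign_deriv [measurable]: "ign_deriv EA uig \<in> borel_measurable borel"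
  unfolding ign_deriv_def by measurable

section \<open>Qualitative properties of the profile\<close>

lemma last_point_ge:
  fixes f :: "real \<Rightarrow> real"
  assumes f: "continuous_on UNIV f" and "a \<le> b" "c \<le> f a"
  obtains t where "a \<le> t" "t \<le> b" "c \<le> f t" "\<And>s. t < s \<Longrightarrow> s \<le> b \<Longrightarrow> f s < c"
proof -
  define T where "T = {a..b} \<inter> {t. c \<le> f t}"
  have "compact T"
    unfolding T_def by (intro compact_Int_closed compact_Icc closed_Collect_le continuous_intros f)
  moreover have "a \<in> T"
    using assms unfolding T_def by auto
  ultimately obtain t where t: "t \<in> T" "\<And>s. s \<in> T \<Longrightarrow> s \<le> t"
    using continuous_attains_sup[of T "\<lambda>t. t"] by (auto intro: continuous_on_id)
  show thesis
  proof (rule that)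
    show "f s < c" if "t < s" "s \<le> b" for s
      using t that by (fastforce simp: T_def)
  qed (use t in \<open>auto simp: T_def\<close>)
qed

lemma continuous_attains_inf_below_limits:
  fixes f :: "real \<Rightarrow> real"
  assumes f: "continuous_on UNIV f" and bot: "(f \<longlongrightarrow> l) at_bot" and top: "(f \<longlongrightarrow> l') at_top"
    and y: "f y < l" "f y < l'"
  obtains x where "\<And>s. f x \<le> f s"
proof -
  obtain A where A: "\<And>s. s \<le> A \<Longrightarrow> f y < f s"
    using order_tendstoD(1)[OF bot y(1)] unfolding eventually_at_bot_linorder by blast
  obtain B where B: "\<And>s. B \<le> s \<Longrightarrow> f y < f s"
    using order_tendstoD(1)[OF top y(2)] unfolding eventually_at_top_linorder by blast
  define S where "S = {min A y..max B y}"
  have "\<exists>x\<in>S. \<forall>s\<in>S. f x \<le> f s"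
    unfolding S_def by (rule continuous_attains_inf) (auto intro: continuous_on_subset[OF f])
  then obtain x where x: "x \<in> S" "\<And>s. s \<in> S \<Longrightarrow> f x \<le> f s"
    by blast
  have "f x \<le> f s" for s
  proof (cases "s \<in> S")
    case False
    then have "f y < f s"
      using A B unfolding S_def by force
    moreover have "f x \<le> f y"
      using x(2) by (simp add: S_def)
    ultimately show ?thesis by linarith
  qed (use x in auto)
  then show thesis by (rule that)
qed

lemma bounded_if_tendsto_at_bot_at_top:
  fixes f :: "real \<Rightarrow> real"
  assumes f: "continuous_on UNIV f" and bot: "(f \<longlongrightarrow> l) at_bot" and top: "(f \<longlongrightarrow> l') at_top"
  obtains C where "\<And>x. \<bar>f x\<bar> \<le> C"
proof -
  obtain A where A: "\<And>x. x \<le> A \<Longrightarrow> \<bar>f x\<bar> < \<bar>l\<bar> + 1"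
    using order_tendstoD(2)[OF tendsto_rabs[OF bot], of "\<bar>l\<bar> + 1"]
    unfolding eventually_at_bot_linorder by auto
  obtain B where B: "\<And>x. B \<le> x \<Longrightarrow> \<bar>f x\<bar> < \<bar>l'\<bar> + 1"
    using order_tendstoD(2)[OF tendsto_rabs[OF top], of "\<bar>l'\<bar> + 1"]
    unfolding eventually_at_top_linorder by auto
  have "compact (f ` {A..B})"
    using f by (intro compact_continuous_image compact_Icc) (auto intro: continuous_on_subset)
  then obtain K where K: "\<And>x. x \<in> {A..B} \<Longrightarrow> \<bar>f x\<bar> \<le> K"
    by (meson compact_imp_bounded bounded_real image_eqI)
  have "\<bar>f x\<bar> \<le> max K (max (\<bar>l\<bar> + 1) (\<bar>l'\<bar> + 1))" for x
  proof (cases "x \<in> {A..B}")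
    case False
    then show ?thesis
      using A[of x] B[of x] by (auto simp: le_max_iff_disj)
  qed (use K in \<open>auto simp: le_max_iff_disj\<close>)
  then show thesis by (rule that)
qed

lemma nonpos_if_tendsto_and_derivative_le:
  fixes u u' :: "real \<Rightarrow> real"
  assumes u: "\<And>x. (u has_real_derivative u' x) (at x)" and lim: "(u \<longlongrightarrow> l) at_top"
    and bound: "\<And>x. A \<le> x \<Longrightarrow> u' x \<le> - e"
  shows "e \<le> 0"
proof (rule ccontr)
  assume "\<not> e \<le> 0"
  then have e: "0 < e"
    by simp
  have le: "u x + e * x \<le> u A + e * A" if "A \<le> x" for x
  proof (rule DERIV_nonpos_imp_nonincreasing[OF that])
    fix s assume "A \<le> s" "s \<le> x"
    show "\<exists>y. ((\<lambda>s. u s + e * s) has_real_derivative y) (at s) \<and> y \<le> 0"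
      using bound[OF \<open>A \<le> s\<close>] by (intro exI[of _ "u' s + e"]) (auto intro!: derivative_eq_intros u)
  qed
  have ev: "\<forall>\<^sub>F x in at_top. e * x - (u A + e * A) \<le> - u x"
    using eventually_ge_at_top[of A]
  proof (rule eventually_mono)
    show "e * x - (u A + e * A) \<le> - u x" if "A \<le> x" for x
      using le[OF that] by linarith
  qed
  have "filterlim (\<lambda>x. e * x - (u A + e * A)) at_top at_top"
    using e by real_asymp
  then have "filterlim (\<lambda>x. - u x) at_infinity at_top"
    by (rule filterlim_at_top_imp_at_infinity[OF filterlim_at_top_mono[OF _ ev]])
  then show False
    using not_tendsto_and_filterlim_at_infinity[OF trivial_limit_at_top_linorder tendsto_minus[OF lim]]
    by blast
qed

lemma level_not_crossed_upward:
  fixes u u' :: "real \<Rightarrow> real"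
  assumes u: "\<And>x. (u has_real_derivative u' x) (at x)"
    and level: "\<And>x. u x = c \<Longrightarrow> u' x < 0"
    and "a \<le> b" "u a \<le> c"
  shows "u b \<le> c"
proof (rule ccontr)
  assume "\<not> u b \<le> c"
  have cont: "continuous_on UNIV u"
    using u by (meson DERIV_isCont continuous_at_imp_continuous_on)
  then obtain t where t: "a \<le> t" "t \<le> b" "- c \<le> - u t" "\<And>s. t < s \<Longrightarrow> s \<le> b \<Longrightarrow> - u s < - c"
    using last_point_ge[of "\<lambda>x. - u x" a b "- c"] \<open>a \<le> b\<close> \<open>u a \<le> c\<close>
    by (auto intro: continuous_intros)
  obtain s where s: "t \<le> s" "s \<le> b" "u s = c"
    using IVT[of u t c b] t \<open>\<not> u b \<le> c\<close> cont by (auto simp: continuous_on_eq_continuous_at)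
  have "u t = c"
    using s t(4)[of s] by (cases "s = t") auto
  then obtain d where d: "d > 0" "\<And>h. 0 < h \<Longrightarrow> h < d \<Longrightarrow> u (t + h) < c"
    using DERIV_neg_dec_right[OF u level] by metis
  have "t < b"
    using t(2,3) \<open>\<not> u b \<le> c\<close> by (cases "t = b") auto
  define h where "h = min (d / 2) (b - t)"
  have "0 < h" "h < d" "t + h \<le> b"
    using d(1) \<open>t < b\<close> by (auto simp: h_def)
  then show False
    using d(2)[of h] t(4)[of "t + h"] by auto
qed

lemma exp_weighted_derivative_nonincreasing:
  fixes z z1 z2 b :: "real \<Rightarrow> real"
  assumes D: "0 < D" and dz1: "\<And>x. (z1 has_real_derivative z2 x) (at x)"
    and eq: "\<And>x. - z1 x = D * z2 x - b x * z x" and b: "\<And>x. 0 \<le> b x"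
    and "x \<le> y" and nonpos: "\<And>s. x \<le> s \<Longrightarrow> s \<le> y \<Longrightarrow> z s \<le> 0"
  shows "z1 y * exp (y / D) \<le> z1 x * exp (x / D)"
proof (rule DERIV_nonpos_imp_nonincreasing[OF \<open>x \<le> y\<close>])
  fix s assume s: "x \<le> s" "s \<le> y"
  have "((\<lambda>s. z1 s * exp (s / D)) has_real_derivative z2 s * exp (s / D) + z1 s * (exp (s / D) * (1 / D))) (at s)"
    using D by (auto intro!: derivative_eq_intros dz1)
  moreover have "z2 s * exp (s / D) + z1 s * (exp (s / D) * (1 / D)) = exp (s / D) / D * (z1 s + D * z2 s)"
    using D by (simp add: field_simps)
  moreover have "z1 s + D * z2 s = b s * z s"
    using eq[of s] by linarith
  moreover have "b s * z s \<le> 0"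
    using b[of s] nonpos[OF s] by (rule mult_nonneg_nonpos)
  then have "exp (s / D) / D * (b s * z s) \<le> 0"
    by (rule mult_nonneg_nonpos[rotated]) (use D in simp)
  ultimately show "\<exists>d. ((\<lambda>s. z1 s * exp (s / D)) has_real_derivative d) (at s) \<and> d \<le> 0"
    by auto
qed

lemma nonneg_if_diffusion_equation:
  fixes z z1 z2 b :: "real \<Rightarrow> real"
  assumes D: "0 < D"
    and dz: "\<And>x. (z has_real_derivative z1 x) (at x)" and dz1: "\<And>x. (z1 has_real_derivative z2 x) (at x)"
    and eq: "\<And>x. - z1 x = D * z2 x - b x * z x" and b: "\<And>x. 0 \<le> b x"
    and bot: "(z \<longlongrightarrow> 0) at_bot" and top: "(z \<longlongrightarrow> 1) at_top"
  shows "0 \<le> z x"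
proof (rule ccontr)
  assume "\<not> 0 \<le> z x"
  have cont: "continuous_on UNIV z"
    using dz by (meson DERIV_isCont continuous_at_imp_continuous_on)
  obtain x0 where x0: "\<And>s. z x0 \<le> z s"
    using continuous_attains_inf_below_limits[OF cont bot top, of x] \<open>\<not> 0 \<le> z x\<close> by force
  define m where "m = z x0"
  have m: "m < 0"
    using x0[of x] \<open>\<not> 0 \<le> z x\<close> by (simp add: m_def)
  have "z1 x0 = 0"
    by (rule DERIV_local_min[OF dz, of 1]) (auto simp: x0)
  obtain N where N: "\<And>s. s \<le> N \<Longrightarrow> m / 2 < z s"
    using order_tendstoD(1)[OF bot, of "m / 2"] m unfolding eventually_at_bot_linorder by auto
  obtain t where t: "t \<le> x0" "m / 2 \<le> z t" "\<And>s. t < s \<Longrightarrow> s \<le> x0 \<Longrightarrow> z s < m / 2"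
    using last_point_ge[OF cont, of "min N x0" x0 "m / 2"] N[of "min N x0"] by auto
  have "t < x0"
    using t(1,2) m by (cases "t = x0") (auto simp: m_def)
  obtain \<xi> where \<xi>: "t < \<xi>" "\<xi> < x0" "z x0 - z t = (x0 - t) * z1 \<xi>"
    using MVT2[OF \<open>t < x0\<close>, of z z1] dz by blast
  have "z1 x0 * exp (x0 / D) \<le> z1 \<xi> * exp (\<xi> / D)"
  proof (rule exp_weighted_derivative_nonincreasing[OF D dz1 eq b])
    show "\<xi> \<le> x0"
      using \<xi>(2) by simp
    show "z s \<le> 0" if "\<xi> \<le> s" "s \<le> x0" for s
      using t(3)[of s] that \<xi>(1) m by linarith
  qed
  then have "0 \<le> (x0 - t) * z1 \<xi>"
    using \<open>z1 x0 = 0\<close> \<open>t < x0\<close> by (simp add: zero_le_mult_iff)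
  then show False
    using \<xi>(3) t(2) m unfolding m_def by linarith
qed

text \<open>The profile equation for \<open>u\<close> reads \<open>(u' + wave_flux u)' = - r\<close>, with \<open>r \<ge> 0\<close> the reaction term.\<close>

definition wave_flux :: "real \<Rightarrow> real" where
  "wave_flux v = v - v\<^sup>2 / 2"

lemma wave_flux_less: "v < v' \<Longrightarrow> v + v' < 2 \<Longrightarrow> wave_flux v < wave_flux v'"
proof -
  assume "v < v'" "v + v' < 2"
  then have "0 < (v' - v) * (1 - (v + v') / 2)"
    by (intro mult_pos_pos) auto
  also have "\<dots> = wave_flux v' - wave_flux v"
    by (simp add: wave_flux_def power2_eq_square field_simps)
  finally show ?thesis by simp
qed

lemma first_integral_nonincreasing:
  fixes u u1 u2 r :: "real \<Rightarrow> real"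
  assumes du: "\<And>x. (u has_real_derivative u1 x) (at x)" and du1: "\<And>x. (u1 has_real_derivative u2 x) (at x)"
    and eq: "\<And>x. - u1 x + u x * u1 x = u2 x + r x" and r: "\<And>x. 0 \<le> r x"
    and "x \<le> y"
  shows "u1 y + wave_flux (u y) \<le> u1 x + wave_flux (u x)"
proof (rule DERIV_nonpos_imp_nonincreasing[OF \<open>x \<le> y\<close>])
  fix s
  have "((\<lambda>s. u1 s + wave_flux (u s)) has_real_derivative u2 s + (u1 s - u s * u1 s)) (at s)"
    unfolding wave_flux_def by (auto intro!: derivative_eq_intros du du1 simp: power2_eq_square)
  moreover have "u2 s + (u1 s - u s * u1 s) = - r s"
    using eq[of s] by (simp add: algebra_simps)
  ultimately show "\<exists>d. ((\<lambda>s. u1 s + wave_flux (u s)) has_real_derivative d) (at s) \<and> d \<le> 0"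
    using r[of s] by auto
qed

lemma first_integral_bounds:
  fixes u u1 u2 r :: "real \<Rightarrow> real"
  assumes du: "\<And>x. (u has_real_derivative u1 x) (at x)" and du1: "\<And>x. (u1 has_real_derivative u2 x) (at x)"
    and eq: "\<And>x. - u1 x + u x * u1 x = u2 x + r x" and r: "\<And>x. 0 \<le> r x"
    and bot: "(u \<longlongrightarrow> um) at_bot" and top: "(u \<longlongrightarrow> up) at_top"
  shows "wave_flux up \<le> u1 x + wave_flux (u x)" and "u1 x + wave_flux (u x) \<le> wave_flux um"
proof -
  note mono = first_integral_nonincreasing[OF du du1 eq r]
  have flux_lim: "((\<lambda>x. wave_flux (u x)) \<longlongrightarrow> wave_flux l) F" if "(u \<longlongrightarrow> l) F" for l F
    using that unfolding wave_flux_def by (auto intro!: tendsto_eq_intros)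
  show "wave_flux up \<le> u1 x + wave_flux (u x)"
  proof (rule ccontr)
    assume contra: "\<not> ?thesis"
    define e where "e = (wave_flux up - (u1 x + wave_flux (u x))) / 2"
    obtain B where B: "\<And>s. B \<le> s \<Longrightarrow> wave_flux up - e < wave_flux (u s)"
      using order_tendstoD(1)[OF flux_lim[OF top], of "wave_flux up - e"] contra
      unfolding e_def eventually_at_top_linorder by auto
    have "e \<le> 0"
    proof (rule nonpos_if_tendsto_and_derivative_le[OF du top])
      fix s assume "max B x \<le> s"
      then have "u1 s + wave_flux (u s) \<le> u1 x + wave_flux (u x)" "wave_flux up - e < wave_flux (u s)"
        using mono[of x s] B[of s] by auto
      then show "u1 s \<le> - e"
        unfolding e_def by argo
    qed
    then show False
      using contra by (simp add: e_def)
  qed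
  show "u1 x + wave_flux (u x) \<le> wave_flux um"
  proof (rule ccontr)
    assume contra: "\<not> ?thesis"
    define e where "e = (u1 x + wave_flux (u x) - wave_flux um) / 2"
    obtain A where A: "\<And>s. s \<le> A \<Longrightarrow> wave_flux (u s) < wave_flux um + e"
      using order_tendstoD(2)[OF flux_lim[OF bot], of "wave_flux um + e"] contra
      unfolding e_def eventually_at_bot_linorder by auto
    have "e \<le> 0"
    proof (rule nonpos_if_tendsto_and_derivative_le[of "\<lambda>s. u (- s)" "\<lambda>s. - u1 (- s)" um "- min A x"])
      show "((\<lambda>s. u (- s)) has_real_derivative - u1 (- s)) (at s)" for s
        using du[of "- s"] by (simp add: DERIV_mirror)
      show "((\<lambda>s. u (- s)) \<longlongrightarrow> um) at_top"
        using bot by (simp add: filterlim_at_bot_mirror)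
      fix s assume "- min A x \<le> s"
      then have "u1 x + wave_flux (u x) \<le> u1 (- s) + wave_flux (u (- s))" "wave_flux (u (- s)) < wave_flux um + e"
        using mono[of "- s" x] A[of "- s"] by auto
      then show "- u1 (- s) \<le> - e"
        unfolding e_def by argo
    qed
    then show False
      using contra by (simp add: e_def)
  qed
qed

lemma bounded_by_end_states:
  fixes u u1 u2 r :: "real \<Rightarrow> real"
  assumes du: "\<And>x. (u has_real_derivative u1 x) (at x)" and du1: "\<And>x. (u1 has_real_derivative u2 x) (at x)"
    and eq: "\<And>x. - u1 x + u x * u1 x = u2 x + r x" and r: "\<And>x. 0 \<le> r x"
    and bot: "(u \<longlongrightarrow> um) at_bot" and top: "(u \<longlongrightarrow> up) at_top" and ord: "up < um" "um < 1"
  shows "up \<le> u x" "u x \<le> um"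
proof -
  note first_integral = first_integral_bounds[OF du du1 eq r bot top]
  \<comment> \<open>Hence \<open>u' < 0\<close> wherever \<open>u\<close> takes a value in \<open>(um, 1)\<close> and \<open>u' > 0\<close> wherever it takes a
    value below \<open>up\<close>, so coming from \<open>um\<close> at \<open>-\<infinity>\<close> it can cross neither level.\<close>
  show "u x \<le> um"
  proof (rule ccontr)
    assume "\<not> u x \<le> um"
    define c where "c = (um + min (u x) 1) / 2"
    have c: "um < c" "c < u x" "c < 1"
      using \<open>\<not> u x \<le> um\<close> ord by (auto simp: c_def)
    obtain N where N: "\<And>s. s \<le> N \<Longrightarrow> u s < c"
      using order_tendstoD(2)[OF bot c(1)] unfolding eventually_at_bot_linorder by auto
    have "u x \<le> c"
    proof (rule level_not_crossed_upward[OF du, of c "min N x"])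
      show "u1 s < 0" if "u s = c" for s
        using first_integral(2)[of s] wave_flux_less[of um c] c ord that by simp
    qed (use N[of "min N x"] in auto)
    then show False
      using c by simp
  qed
  show "up \<le> u x"
  proof (rule ccontr)
    assume "\<not> up \<le> u x"
    define c where "c = (u x + up) / 2"
    have c: "u x < c" "c < up"
      using \<open>\<not> up \<le> u x\<close> by (auto simp: c_def)
    obtain N where N: "\<And>s. s \<le> N \<Longrightarrow> c < u s"
      using order_tendstoD(1)[OF bot, of c] c ord unfolding eventually_at_bot_linorder by auto
    have "- u x \<le> - c"
    proof (rule level_not_crossed_upward[of "\<lambda>s. - u s" "\<lambda>s. - u1 s" "- c" "min N x"])
      show "((\<lambda>s. - u s) has_real_derivative - u1 s) (at s)" for s
        by (intro derivative_intros du)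
      show "- u1 s < 0" if "- u s = - c" for s
        using first_integral(1)[of s] wave_flux_less[of c up] c ord that by simp
    qed (use N[of "min N x"] in auto)
    then show False
      using c by simp
  qed
qed

lemma weak_det_profile_properties:
  assumes q: "0 < q" and k: "0 < k" and D: "0 < D" and ord: "up < um" "um < 1"
    and prof: "weak_det_profile q k D EA uig um up ub zb"
  shows "continuous_on UNIV ub" "continuous_on UNIV zb"
    and "\<And>x. up \<le> ub x" "\<And>x. ub x \<le> um" "\<And>x. 0 \<le> zb x"
    and "\<exists>Z. \<forall>x. zb x \<le> Z"
proof -
  obtain ub1 ub2 zb1 zb2 where
    dub: "\<And>x. (ub has_real_derivative ub1 x) (at x)" and dub1: "\<And>x. (ub1 has_real_derivative ub2 x) (at x)"
    and dzb: "\<And>x. (zb has_real_derivative zb1 x) (at x)" and dzb1: "\<And>x. (zb1 has_real_derivative zb2 x) (at x)"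
    and eq_u: "\<And>x. - ub1 x + ub x * ub1 x = ub2 x + q * k * ign EA uig (ub x) * zb x"
    and eq_z: "\<And>x. - zb1 x = D * zb2 x - k * ign EA uig (ub x) * zb x"
    and lim: "(ub \<longlongrightarrow> um) at_bot" "(zb \<longlongrightarrow> 0) at_bot" "(ub \<longlongrightarrow> up) at_top" "(zb \<longlongrightarrow> 1) at_top"
    using prof unfolding weak_det_profile_def by blast
  show cont: "continuous_on UNIV ub" "continuous_on UNIV zb"
    using dub dzb by (meson DERIV_isCont continuous_at_imp_continuous_on)+
  show zb: "0 \<le> zb x" for x
    by (rule nonneg_if_diffusion_equation[OF D dzb dzb1 eq_z _ lim(2,4)])
      (use k ign_nonneg in simp)
  show "up \<le> ub x" "ub x \<le> um" for x
    by (rule bounded_by_end_states[OF dub dub1 eq_u _ lim(1,3) ord];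
        use q k zb ign_nonneg in simp)+
  obtain Z where "\<And>x. \<bar>zb x\<bar> \<le> Z"
    using bounded_if_tendsto_at_bot_at_top[OF cont(2) lim(2,4)] by blast
  then show "\<exists>Z. \<forall>x. zb x \<le> Z"
    by (meson abs_le_D1)
qed

lemma ignition_coefficient_bounds:
  fixes ub zb :: "real \<Rightarrow> real"
  assumes EA: "0 < EA" and k: "0 < k" and q: "0 < q"
    and ub: "continuous_on UNIV ub" and zb: "continuous_on UNIV zb" "\<And>x. 0 \<le> zb x" "\<And>x. zb x \<le> Z"
    and L: "L = (SUP x. deriv (ign EA uig) (ub x) * zb x)"
    and M: "M = (SUP x. (1 + q) * deriv (ign EA uig) (ub x) * zb x - ign EA uig (ub x))"
  shows "(\<lambda>x. k * deriv (ign EA uig) (ub x) * zb x) \<in> borel_measurable lborel"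
    and "(\<lambda>x. k * (ign EA uig (ub x) - q * deriv (ign EA uig) (ub x) * zb x)) \<in> borel_measurable lborel"
    and "0 \<le> k * deriv (ign EA uig) (ub x) * zb x"
    and "k * deriv (ign EA uig) (ub x) * zb x \<le> k * L"
    and "k * deriv (ign EA uig) (ub x) * zb x - k * (ign EA uig (ub x) - q * deriv (ign EA uig) (ub x) * zb x) \<le> k * M"
    and "\<bar>k * (ign EA uig (ub x) - q * deriv (ign EA uig) (ub x) * zb x)\<bar> \<le> k * (1 + q * (4 / EA * Z))"
proof -
  note deriv = deriv_ign[OF EA]
  have [measurable]: "ub \<in> borel_measurable borel" "zb \<in> borel_measurable borel"
    using ub zb by (simp_all add: borel_measurable_continuous_onI)
  show "(\<lambda>x. k * deriv (ign EA uig) (ub x) * zb x) \<in> borel_measurable lborel"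
    and "(\<lambda>x. k * (ign EA uig (ub x) - q * deriv (ign EA uig) (ub x) * zb x)) \<in> borel_measurable lborel"
    unfolding deriv by measurable
  have bound: "0 \<le> ign_deriv EA uig (ub y) * zb y" "ign_deriv EA uig (ub y) * zb y \<le> 4 / EA * Z" for y
    using ign_deriv_nonneg[OF EA] zb(2) by (rule mult_nonneg_nonneg)
      (use ign_deriv_le[OF EA] ign_deriv_nonneg[OF EA] zb(2,3) EA in \<open>intro mult_mono; simp\<close>)
  show "0 \<le> k * deriv (ign EA uig) (ub x) * zb x"
    unfolding deriv using bound(1)[of x] k by (simp add: mult.assoc)
  have "bdd_above (range (\<lambda>y. ign_deriv EA uig (ub y) * zb y))"
    by (rule bdd_aboveI2[where M="4 / EA * Z"]) (rule bound(2))
  then have "ign_deriv EA uig (ub x) * zb x \<le> L"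
    unfolding L deriv by (rule cSUP_upper[OF UNIV_I])
  then show "k * deriv (ign EA uig) (ub x) * zb x \<le> k * L"
    unfolding deriv using k by (simp add: mult.assoc)
  have "bdd_above (range (\<lambda>y. (1 + q) * ign_deriv EA uig (ub y) * zb y - ign EA uig (ub y)))"
  proof (rule bdd_aboveI2[where M="(1 + q) * (4 / EA * Z)"])
    show "(1 + q) * ign_deriv EA uig (ub y) * zb y - ign EA uig (ub y) \<le> (1 + q) * (4 / EA * Z)" for y
      using mult_left_mono[OF bound(2)[of y], of "1 + q"] q ign_nonneg[of EA uig "ub y"]
      by (simp add: mult.assoc)
  qed
  then have "(1 + q) * ign_deriv EA uig (ub x) * zb x - ign EA uig (ub x) \<le> M"
    unfolding M deriv by (rule cSUP_upper[OF UNIV_I])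
  then have "k * ((1 + q) * ign_deriv EA uig (ub x) * zb x - ign EA uig (ub x)) \<le> k * M"
    using k by (intro mult_left_mono) auto
  then show "k * deriv (ign EA uig) (ub x) * zb x - k * (ign EA uig (ub x) - q * deriv (ign EA uig) (ub x) * zb x) \<le> k * M"
    unfolding deriv by (simp add: algebra_simps)
  have "q * (ign_deriv EA uig (ub x) * zb x) \<le> q * (4 / EA * Z)"
    using bound(2) q by (intro mult_left_mono) auto
  moreover have "0 \<le> q * (ign_deriv EA uig (ub x) * zb x)"
    using bound(1) q by simp
  ultimately have "\<bar>ign EA uig (ub x) - q * ign_deriv EA uig (ub x) * zb x\<bar> \<le> 1 + q * (4 / EA * Z)"
    using ign_nonneg[of EA uig "ub x"] ign_le_1[OF EA, of uig "ub x"] by (simp add: abs_le_iff mult.assoc)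
  then show "\<bar>k * (ign EA uig (ub x) - q * deriv (ign EA uig) (ub x) * zb x)\<bar> \<le> k * (1 + q * (4 / EA * Z))"
    unfolding deriv using k by (simp add: abs_mult)
qed

section \<open>Energy estimates\<close>

lemma Re_plus_abs_Im_le: "Re y + \<bar>Im y\<bar> \<le> sqrt 2 * cmod y"
proof (rule power2_le_imp_le)
  have "(Re y + \<bar>Im y\<bar>)\<^sup>2 \<le> 2 * ((Re y)\<^sup>2 + (Im y)\<^sup>2)"
    using sum_squares_bound[of "Re y" "\<bar>Im y\<bar>"] by (simp add: power2_eq_square algebra_simps)
  then show "(Re y + \<bar>Im y\<bar>)\<^sup>2 \<le> (sqrt 2 * cmod y)\<^sup>2"
    by (simp add: power_mult_distrib cmod_power2)
qed simp

lemma Re_plus_abs_Im_mult_le: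
  fixes lam T X :: complex and N C :: real
  assumes eq: "lam * of_real N + of_real C = T + X" and T: "Re T = 0" and N: "0 \<le> N"
  shows "(Re lam + \<bar>Im lam\<bar>) * N + C \<le> cmod T + sqrt 2 * cmod X"
proof -
  have Re: "Re lam * N + C = Re X"
    using arg_cong[OF eq, of Re] T by simp
  have "Im lam * N = Im T + Im X"
    using arg_cong[OF eq, of Im] by simp
  then have Im: "\<bar>Im lam\<bar> * N = \<bar>Im T + Im X\<bar>"
    using N by (metis abs_mult abs_of_nonneg)
  have "(Re lam + \<bar>Im lam\<bar>) * N + C = Re X + \<bar>Im T + Im X\<bar>"
    using Re Im by (simp add: distrib_right)
  also have "\<dots> \<le> cmod T + sqrt 2 * cmod X"
    using abs_triangle_ineq[of "Im T" "Im X"] abs_Im_le_cmod[of T] Re_plus_abs_Im_le[of X] by linarith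
  finally show ?thesis .
qed

lemma w_energy_identity:
  fixes w w1 w2 z z1 z2 :: "real \<Rightarrow> complex" and v p :: "real \<Rightarrow> real" and r :: real
  assumes w: "H2_with w w1 w2" and z: "H2_with z z1 z2"
    and [measurable]: "v \<in> borel_measurable lborel" "p \<in> borel_measurable lborel"
    and v_bound: "\<And>x. \<bar>v x\<bar> \<le> V" and p_bound: "\<And>x. \<bar>p x\<bar> \<le> P"
    and eq: "\<And>x. lam * w x - of_real (v x) * w1 x = of_real (p x) * z x + of_real r * z1 x + w2 x"
  shows "lam * of_real (L2_norm_sq w) + of_real (L2_norm_sq w1)
    = (LINT x|lborel. of_real (v x) * w1 x * cnj (w x)) + (LINT x|lborel. of_real (p x) * z x * cnj (w x))
      - of_real r * (LINT x|lborel. z x * cnj (w1 x))"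
proof -
  note [measurable] = H2_withD(7-9)[OF w] H2_withD(7-9)[OF z]
  note L2 = H2_withD(3-5)[OF w] H2_withD(3-5)[OF z]
  have int_v: "integrable lborel (\<lambda>x. of_real (v x) * w1 x * cnj (w x))"
    using v_bound by (intro integrable_bounded_mult_cnj_L2 L2) measurable
  have int_p: "integrable lborel (\<lambda>x. of_real (p x) * z x * cnj (w x))"
    using p_bound by (intro integrable_bounded_mult_cnj_L2 L2) measurable
  have int_w: "integrable lborel (\<lambda>x. w x * cnj (w x))" "integrable lborel (\<lambda>x. z1 x * cnj (w x))"
    by (intro integrable_mult_cnj_L2 L2; measurable)+
  have w2: "w2 x = lam * w x - of_real (v x) * w1 x - of_real (p x) * z x - of_real r * z1 x" for x
    using eq[of x] by (simp add: algebra_simps)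
  have "- of_real (L2_norm_sq w1) = (LINT x|lborel. w2 x * cnj (w x))"
    using H2_with_integral_second_derivative_mult_cnj[OF w] by simp
  also have "\<dots> = (LINT x|lborel. lam * (w x * cnj (w x)) - of_real (v x) * w1 x * cnj (w x)
      - of_real (p x) * z x * cnj (w x) - of_real r * (z1 x * cnj (w x)))"
    unfolding w2 by (simp add: algebra_simps)
  also have "\<dots> = lam * of_real (L2_norm_sq w) - (LINT x|lborel. of_real (v x) * w1 x * cnj (w x))
      - (LINT x|lborel. of_real (p x) * z x * cnj (w x)) - of_real r * (LINT x|lborel. z1 x * cnj (w x))"
    using int_v int_p int_w by (simp add: integral_mult_cnj_self)
  also have "(LINT x|lborel. z1 x * cnj (w x)) = - (LINT x|lborel. z x * cnj (w1 x))"
    by (rule integration_by_parts_L2) (use H2_withD[OF w] H2_withD[OF z] in auto)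
  finally show ?thesis
    by (simp add: algebra_simps)
qed

lemma w_young_inequality:
  fixes a b c p \<rho> :: real
  assumes "0 \<le> a" "0 \<le> b" "0 \<le> c" "\<bar>p\<bar> \<le> 1/2"
  shows "sqrt 2 * (a * b + \<bar>p\<bar> * c * b + \<rho> * c * a) \<le> 3/4 * a\<^sup>2 + 3 * b\<^sup>2 + (1/8 + \<rho>\<^sup>2) * c\<^sup>2"
proof -
  define s where "s = sqrt 2"
  have s2: "s * s = 2" and s0: "0 \<le> s"
    unfolding s_def by simp_all
  have "s * (a * b) \<le> a\<^sup>2 / 4 + 2 * b\<^sup>2"
  proof -
    have "0 \<le> (a / 2 - s * b)\<^sup>2" by simp
    also have "\<dots> = a\<^sup>2 / 4 - s * (a * b) + (s * s) * b\<^sup>2"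
      by (simp add: power2_eq_square algebra_simps)
    finally show ?thesis using s2 by simp
  qed
  moreover have "s * (\<bar>p\<bar> * c * b) \<le> b\<^sup>2 + c\<^sup>2 / 8"
  proof -
    have "s * (\<bar>p\<bar> * c * b) \<le> s * (1/2 * c * b)"
      using assms s0 by (intro mult_left_mono mult_right_mono) auto
    also have "0 \<le> (b - s / 4 * c)\<^sup>2" by simp
    then have "s * (1/2 * c * b) \<le> b\<^sup>2 + (s * s) / 16 * c\<^sup>2"
      by (simp add: power2_eq_square algebra_simps)
    finally show ?thesis using s2 by simp
  qed
  moreover have "s * (\<rho> * c * a) \<le> a\<^sup>2 / 2 + \<rho>\<^sup>2 * c\<^sup>2"
  proof -
    have "0 \<le> (s / 2 * a - \<rho> * c)\<^sup>2" by simp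
    also have "\<dots> = (s * s) / 4 * a\<^sup>2 - s * (\<rho> * c * a) + \<rho>\<^sup>2 * c\<^sup>2"
      by (simp add: power2_eq_square algebra_simps)
    finally show ?thesis using s2 by simp
  qed
  ultimately show ?thesis
    unfolding s_def[symmetric] by (simp add: algebra_simps)
qed

lemma w_estimate_pointwise:
  fixes a b c :: complex and v p r \<rho> :: real
  assumes v: "\<bar>v\<bar> \<le> 1" and p: "\<bar>p\<bar> \<le> 1/2" and r: "\<bar>r\<bar> \<le> \<rho>"
  shows "sqrt 2 * cmod (of_real v * a * cnj b + of_real p * c * cnj b - of_real r * (c * cnj a))
    \<le> 3/4 * (cmod a)\<^sup>2 + 3 * (cmod b)\<^sup>2 + (1/8 + \<rho>\<^sup>2) * (cmod c)\<^sup>2"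
proof -
  have "cmod (of_real v * a * cnj b + of_real p * c * cnj b - of_real r * (c * cnj a))
      \<le> cmod (of_real v * a * cnj b) + cmod (of_real p * c * cnj b) + cmod (of_real r * (c * cnj a))"
    using norm_triangle_ineq4[of "of_real v * a * cnj b + of_real p * c * cnj b" "of_real r * (c * cnj a)"]
      norm_triangle_ineq[of "of_real v * a * cnj b" "of_real p * c * cnj b"]
    by linarith
  also have "\<dots> \<le> cmod a * cmod b + \<bar>p\<bar> * cmod c * cmod b + \<rho> * cmod c * cmod a"
    using mult_right_mono[OF v, of "cmod a * cmod b"] mult_right_mono[OF r, of "cmod c * cmod a"]
    by (simp add: norm_mult mult.assoc)
  finally have "sqrt 2 * cmod (of_real v * a * cnj b + of_real p * c * cnj b - of_real r * (c * cnj a))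
      \<le> sqrt 2 * (cmod a * cmod b + \<bar>p\<bar> * cmod c * cmod b + \<rho> * cmod c * cmod a)"
    by (rule mult_left_mono) simp
  also have "\<dots> \<le> 3/4 * (cmod a)\<^sup>2 + 3 * (cmod b)\<^sup>2 + (1/8 + \<rho>\<^sup>2) * (cmod c)\<^sup>2"
    using p by (intro w_young_inequality) auto
  finally show ?thesis .
qed

lemma w_energy_estimate:
  fixes w w1 w2 z z1 z2 :: "real \<Rightarrow> complex" and v p :: "real \<Rightarrow> real" and r \<rho> :: real
  assumes w: "H2_with w w1 w2" and z: "H2_with z z1 z2"
    and meas [measurable]: "v \<in> borel_measurable lborel" "p \<in> borel_measurable lborel"
    and v: "\<And>x. \<bar>v x\<bar> \<le> 1" and p: "\<And>x. \<bar>p x\<bar> \<le> 1/2" and r: "\<bar>r\<bar> \<le> \<rho>"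
    and eq: "\<And>x. lam * w x - of_real (v x) * w1 x = of_real (p x) * z x + of_real r * z1 x + w2 x"
  shows "(Re lam + \<bar>Im lam\<bar>) * L2_norm_sq w + L2_norm_sq w1
    \<le> 3/4 * L2_norm_sq w1 + 3 * L2_norm_sq w + (1/8 + \<rho>\<^sup>2) * L2_norm_sq z"
proof -
  note [measurable] = H2_withD(7-9)[OF w] H2_withD(7-9)[OF z]
  note L2 = H2_withD(3-5)[OF w] H2_withD(3-5)[OF z]
  define Y where "Y x = of_real (v x) * w1 x * cnj (w x) + of_real (p x) * z x * cnj (w x)
    - of_real r * (z x * cnj (w1 x))" for x
  have int_v: "integrable lborel (\<lambda>x. of_real (v x) * w1 x * cnj (w x))"
    using v by (intro integrable_bounded_mult_cnj_L2 L2) measurable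
  have int_p: "integrable lborel (\<lambda>x. of_real (p x) * z x * cnj (w x))"
    using p by (intro integrable_bounded_mult_cnj_L2 L2) measurable
  have int_z: "integrable lborel (\<lambda>x. z x * cnj (w1 x))"
    by (intro integrable_mult_cnj_L2 L2) measurable
  have "lam * of_real (L2_norm_sq w) + of_real (L2_norm_sq w1) = 0 + (LINT x|lborel. Y x)"
    unfolding w_energy_identity[OF w z meas v p eq] Y_def using int_v int_p int_z by simp
  then have "(Re lam + \<bar>Im lam\<bar>) * L2_norm_sq w + L2_norm_sq w1 \<le> cmod 0 + sqrt 2 * cmod (LINT x|lborel. Y x)"
    by (rule Re_plus_abs_Im_mult_le) auto
  also have "\<dots> \<le> (LINT x|lborel. sqrt 2 * cmod (Y x))"
    using mult_left_mono[OF integral_norm_bound[of lborel Y], of "sqrt 2"] by simp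
  also have "\<dots> \<le> (LINT x|lborel. 3/4 * (cmod (w1 x))\<^sup>2 + 3 * (cmod (w x))\<^sup>2 + (1/8 + \<rho>\<^sup>2) * (cmod (z x))\<^sup>2)"
  proof (rule integral_mono)
    show "integrable lborel (\<lambda>x. sqrt 2 * cmod (Y x))"
      unfolding Y_def using int_v int_p int_z by auto
    show "integrable lborel (\<lambda>x. 3/4 * (cmod (w1 x))\<^sup>2 + 3 * (cmod (w x))\<^sup>2 + (1/8 + \<rho>\<^sup>2) * (cmod (z x))\<^sup>2)"
      using L2 by auto
    show "sqrt 2 * cmod (Y x) \<le> 3/4 * (cmod (w1 x))\<^sup>2 + 3 * (cmod (w x))\<^sup>2 + (1/8 + \<rho>\<^sup>2) * (cmod (z x))\<^sup>2" for x
      unfolding Y_def by (rule w_estimate_pointwise[OF v p r])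
  qed
  also have "\<dots> = 3/4 * L2_norm_sq w1 + 3 * L2_norm_sq w + (1/8 + \<rho>\<^sup>2) * L2_norm_sq z"
    using L2 by simp
  finally show ?thesis .
qed

lemma w_energy_estimate_majda:
  fixes w w1 w2 z z1 z2 :: "real \<Rightarrow> complex" and u :: "real \<Rightarrow> real"
  assumes w: "H2_with w w1 w2" and z: "H2_with z z1 z2"
    and [measurable]: "u \<in> borel_measurable borel" and u: "\<And>x. 0 \<le> u x" "\<And>x. u x \<le> 1"
    and q: "0 < q" "q \<le> 1/2"
    and eq: "\<And>x. lam * w x - (1 - of_real (u x)) * w1 x
      = of_real (q * u x) * z x + of_real (q * (D - 1)) * z1 x + w2 x"
  shows "(Re lam + \<bar>Im lam\<bar>) * L2_norm_sq w + L2_norm_sq w1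
    \<le> 3/4 * L2_norm_sq w1 + 3 * L2_norm_sq w + (1/8 + \<bar>D - 1\<bar>\<^sup>2 / 4) * L2_norm_sq z"
proof -
  have "(Re lam + \<bar>Im lam\<bar>) * L2_norm_sq w + L2_norm_sq w1
    \<le> 3/4 * L2_norm_sq w1 + 3 * L2_norm_sq w + (1/8 + (\<bar>D - 1\<bar> / 2)\<^sup>2) * L2_norm_sq z"
  proof (rule w_energy_estimate[OF w z, where v="\<lambda>x. 1 - u x" and p="\<lambda>x. q * u x" and r="q * (D - 1)"])
    show "\<bar>1 - u x\<bar> \<le> 1" "\<bar>q * u x\<bar> \<le> 1/2" for x
      using u[of x] mult_mono[of q "1/2" "u x" 1] q by auto
    show "\<bar>q * (D - 1)\<bar> \<le> \<bar>D - 1\<bar> / 2"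
      using mult_right_mono[OF q(2), of "\<bar>D - 1\<bar>"] q by (simp add: abs_mult)
    show "lam * w x - of_real (1 - u x) * w1 x = of_real (q * u x) * z x + of_real (q * (D - 1)) * z1 x + w2 x" for x
      using eq[of x] by simp
  qed measurable
  then show ?thesis
    by (simp add: power_divide)
qed

lemma z_energy_identity:
  fixes w w1 w2 z z1 z2 :: "real \<Rightarrow> complex" and a c :: "real \<Rightarrow> real" and A C D :: real
  assumes w: "H2_with w w1 w2" and z: "H2_with z z1 z2"
    and [measurable]: "a \<in> borel_measurable lborel" "c \<in> borel_measurable lborel"
    and a: "\<And>x. \<bar>a x\<bar> \<le> A" and c: "\<And>x. \<bar>c x\<bar> \<le> C"
    and eq: "\<And>x. lam * z x + of_real (c x) * z x = z1 x + of_real (a x) * w1 x + of_real D * z2 x"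
  shows "lam * of_real (L2_norm_sq z) + of_real ((LINT x|lborel. c x * (cmod (z x))\<^sup>2) + D * L2_norm_sq z1)
    = (LINT x|lborel. z1 x * cnj (z x)) + (LINT x|lborel. of_real (a x) * w1 x * cnj (z x))"
proof -
  note [measurable] = H2_withD(7-9)[OF w] H2_withD(7-9)[OF z]
  note L2 = H2_withD(3-5)[OF w] H2_withD(3-5)[OF z]
  have int_a: "integrable lborel (\<lambda>x. of_real (a x) * w1 x * cnj (z x))"
    using a by (intro integrable_bounded_mult_cnj_L2 L2) measurable
  have int_c: "integrable lborel (\<lambda>x. of_real (c x) * z x * cnj (z x))"
    using c by (intro integrable_bounded_mult_cnj_L2 L2) measurable
  have int_z: "integrable lborel (\<lambda>x. z x * cnj (z x))" "integrable lborel (\<lambda>x. z1 x * cnj (z x))"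
    by (intro integrable_mult_cnj_L2 L2; measurable)+
  have cz: "of_real (c x) * z x * cnj (z x) = of_real (c x * (cmod (z x))\<^sup>2)" for x
    by (simp only: mult.assoc complex_norm_square[symmetric] of_real_mult[symmetric])
  have Dz2: "of_real D * z2 x = lam * z x + of_real (c x) * z x - z1 x - of_real (a x) * w1 x" for x
    using eq[of x] by (simp add: algebra_simps)
  have "- of_real D * of_real (L2_norm_sq z1) = of_real D * (LINT x|lborel. z2 x * cnj (z x))"
    using H2_with_integral_second_derivative_mult_cnj[OF z] by simp
  also have "\<dots> = (LINT x|lborel. (of_real D * z2 x) * cnj (z x))"
    by (simp add: mult.assoc)
  also have "\<dots> = (LINT x|lborel. lam * (z x * cnj (z x)) + of_real (c x) * z x * cnj (z x)
      - z1 x * cnj (z x) - of_real (a x) * w1 x * cnj (z x))"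
    unfolding Dz2 by (simp add: algebra_simps)
  also have "\<dots> = lam * (LINT x|lborel. z x * cnj (z x)) + (LINT x|lborel. of_real (c x) * z x * cnj (z x))
      - (LINT x|lborel. z1 x * cnj (z x)) - (LINT x|lborel. of_real (a x) * w1 x * cnj (z x))"
    using int_a int_c int_z by simp
  also have "\<dots> = lam * of_real (L2_norm_sq z) + of_real (LINT x|lborel. c x * (cmod (z x))\<^sup>2)
      - (LINT x|lborel. z1 x * cnj (z x)) - (LINT x|lborel. of_real (a x) * w1 x * cnj (z x))"
    unfolding cz integral_complex_of_real integral_mult_cnj_self ..
  finally show ?thesis
    by (simp add: algebra_simps)
qed

lemma z_young_inequality:
  fixes u y v a c A B D :: real
  assumes "0 \<le> u" "0 \<le> y" "0 \<le> v" "0 < D" "0 \<le> a" "a \<le> A" "a - c \<le> B"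
  shows "u * y + sqrt 2 * (a * v * y) \<le> D * u\<^sup>2 + (c + B + 1 / (4 * D)) * y\<^sup>2 + A / 2 * v\<^sup>2"
proof -
  define s where "s = sqrt 2"
  have s2: "s * s = 2"
    unfolding s_def by simp
  have "u * y \<le> D * u\<^sup>2 + y\<^sup>2 / (4 * D)"
  proof -
    have "0 \<le> (2 * D * u - y)\<^sup>2 / (4 * D)"
      using assms by simp
    also have "\<dots> = D * u\<^sup>2 - u * y + y\<^sup>2 / (4 * D)"
      using assms by (simp add: power2_eq_square field_simps)
    finally show ?thesis by simp
  qed
  moreover have "s * (a * v * y) \<le> a * y\<^sup>2 + a / 2 * v\<^sup>2"
  proof -
    have "0 \<le> a * (y - s / 2 * v)\<^sup>2"
      using assms by simp
    also have "\<dots> = a * y\<^sup>2 - s * (a * v * y) + a * (s * s) / 4 * v\<^sup>2"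
      by (simp add: power2_eq_square algebra_simps)
    finally show ?thesis using s2 by simp
  qed
  moreover have "a * y\<^sup>2 \<le> (c + B) * y\<^sup>2" "a / 2 * v\<^sup>2 \<le> A / 2 * v\<^sup>2"
    using assms by (intro mult_right_mono; simp)+
  ultimately show ?thesis
    unfolding s_def[symmetric] by (simp add: algebra_simps)
qed

lemma z_estimate_pointwise:
  fixes s t u :: complex and a c A B D :: real
  assumes "0 < D" "0 \<le> a" "a \<le> A" "a - c \<le> B"
  shows "cmod (s * cnj t) + sqrt 2 * cmod (of_real a * u * cnj t)
    \<le> D * (cmod s)\<^sup>2 + (c + B + 1 / (4 * D)) * (cmod t)\<^sup>2 + A / 2 * (cmod u)\<^sup>2"
  using z_young_inequality[of "cmod s" "cmod t" "cmod u" D a A c B] assms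
  by (simp add: norm_mult abs_of_nonneg mult.assoc mult.left_commute)

lemma z_energy_estimate:
  fixes w w1 w2 z z1 z2 :: "real \<Rightarrow> complex" and a c :: "real \<Rightarrow> real" and A B C D :: real
  assumes w: "H2_with w w1 w2" and z: "H2_with z z1 z2" and D: "0 < D"
    and [measurable]: "a \<in> borel_measurable lborel" "c \<in> borel_measurable lborel"
    and a: "\<And>x. 0 \<le> a x" "\<And>x. a x \<le> A" and ac: "\<And>x. a x - c x \<le> B" and c: "\<And>x. \<bar>c x\<bar> \<le> C"
    and eq: "\<And>x. lam * z x + of_real (c x) * z x = z1 x + of_real (a x) * w1 x + of_real D * z2 x"
  shows "(Re lam + \<bar>Im lam\<bar>) * L2_norm_sq z \<le> (B + 1 / (4 * D)) * L2_norm_sq z + A / 2 * L2_norm_sq w1"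
proof -
  note [measurable] = H2_withD(7-9)[OF w] H2_withD(7-9)[OF z]
  note L2 = H2_withD(3-5)[OF w] H2_withD(3-5)[OF z]
  define T where "T = (LINT x|lborel. z1 x * cnj (z x))"
  define X where "X = (LINT x|lborel. of_real (a x) * w1 x * cnj (z x))"
  define C0 where "C0 = (LINT x|lborel. c x * (cmod (z x))\<^sup>2)"
  have abs_a: "\<bar>a x\<bar> \<le> A" for x
    using a[of x] by simp
  have int_T: "integrable lborel (\<lambda>x. z1 x * cnj (z x))"
    by (intro integrable_mult_cnj_L2 L2) measurable
  have int_X: "integrable lborel (\<lambda>x. of_real (a x) * w1 x * cnj (z x))"
    using abs_a by (intro integrable_bounded_mult_cnj_L2 L2) measurable
  have "integrable lborel (\<lambda>x. of_real (c x) * z x * cnj (z x))"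
    using c by (intro integrable_bounded_mult_cnj_L2 L2) measurable
  moreover have "of_real (c x) * z x * cnj (z x) = of_real (c x * (cmod (z x))\<^sup>2)" for x
    by (simp only: mult.assoc complex_norm_square[symmetric] of_real_mult[symmetric])
  ultimately have int_C0: "integrable lborel (\<lambda>x. c x * (cmod (z x))\<^sup>2)"
    by (simp only: complex_of_real_integrable_eq)
  have "(Re lam + \<bar>Im lam\<bar>) * L2_norm_sq z + (C0 + D * L2_norm_sq z1) \<le> cmod T + sqrt 2 * cmod X"
  proof (rule Re_plus_abs_Im_mult_le)
    show "lam * of_real (L2_norm_sq z) + of_real (C0 + D * L2_norm_sq z1) = T + X"
      unfolding C0_def T_def X_def by (rule z_energy_identity[OF w z _ _ abs_a c eq]) measurable
    show "Re T = 0"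
      unfolding T_def using H2_withD[OF z] by (intro Re_integral_derivative_mult_cnj) auto
  qed (use L2 in \<open>auto intro: integral_nonneg_AE\<close>)
  also have "\<dots> \<le> (LINT x|lborel. cmod (z1 x * cnj (z x))) + sqrt 2 * (LINT x|lborel. cmod (of_real (a x) * w1 x * cnj (z x)))"
    unfolding T_def X_def by (intro add_mono mult_left_mono integral_norm_bound) simp_all
  also have "\<dots> = (LINT x|lborel. cmod (z1 x * cnj (z x)) + sqrt 2 * cmod (of_real (a x) * w1 x * cnj (z x)))"
    using integrable_norm[OF int_T] integrable_norm[OF int_X] by simp
  also have "\<dots> \<le> (LINT x|lborel. D * (cmod (z1 x))\<^sup>2 + c x * (cmod (z x))\<^sup>2
      + (B + 1 / (4 * D)) * (cmod (z x))\<^sup>2 + A / 2 * (cmod (w1 x))\<^sup>2)"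
  proof (rule integral_mono)
    show "integrable lborel (\<lambda>x. cmod (z1 x * cnj (z x)) + sqrt 2 * cmod (of_real (a x) * w1 x * cnj (z x)))"
      using int_T int_X by simp
    show "integrable lborel (\<lambda>x. D * (cmod (z1 x))\<^sup>2 + c x * (cmod (z x))\<^sup>2
      + (B + 1 / (4 * D)) * (cmod (z x))\<^sup>2 + A / 2 * (cmod (w1 x))\<^sup>2)"
      using L2 int_C0 by simp
    show "cmod (z1 x * cnj (z x)) + sqrt 2 * cmod (of_real (a x) * w1 x * cnj (z x))
      \<le> D * (cmod (z1 x))\<^sup>2 + c x * (cmod (z x))\<^sup>2 + (B + 1 / (4 * D)) * (cmod (z x))\<^sup>2 + A / 2 * (cmod (w1 x))\<^sup>2" for x
      using z_estimate_pointwise[OF D a(1)[of x] a(2)[of x] ac[of x], where s="z1 x" and t="z x" and u="w1 x"]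
      by (simp add: algebra_simps)
  qed
  also have "\<dots> = D * L2_norm_sq z1 + C0 + (B + 1 / (4 * D)) * L2_norm_sq z + A / 2 * L2_norm_sq w1"
    unfolding C0_def using L2 int_C0 by simp
  finally show ?thesis
    by simp
qed

lemma energy_estimates_force_zero:
  fixes s N N1 Z c A E :: real
  assumes w: "s * N + N1 \<le> 3/4 * N1 + 3 * N + c * Z" and z: "s * Z \<le> E * Z + A / 2 * N1"
    and nonneg: "0 \<le> N" "0 \<le> N1" "0 \<le> Z" "0 \<le> A"
    and s: "3 < s" "E + 2 * c * A < s"
  shows "N = 0 \<and> Z = 0"
proof -
  have "0 \<le> (s - 3) * N"
    using s nonneg by simp
  then have N1: "N1 \<le> 4 * c * Z"
    using w by (simp add: algebra_simps)
  have "A / 2 * N1 \<le> A / 2 * (4 * c * Z)"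
    using N1 nonneg by (intro mult_left_mono) auto
  then have "(s - (E + 2 * c * A)) * Z \<le> 0"
    using z by (simp add: algebra_simps)
  then have "Z = 0"
    using s nonneg by (simp add: mult_le_0_iff)
  moreover from this have "(s - 3) * N \<le> 0"
    using w nonneg by (simp add: algebra_simps)
  then have "N = 0"
    using s nonneg by (simp add: mult_le_0_iff)
  ultimately show ?thesis by simp
qed

lemma eigenfunction_energy_estimates:
  fixes w w1 w2 z z1 z2 :: "real \<Rightarrow> complex"
  assumes q: "0 < q" "q \<le> 1/2" and k: "0 < k" and D: "0 < D" and EA: "0 < EA"
    and ord: "0 \<le> up" "up < um" "um < 1"
    and prof: "weak_det_profile q k D EA uig um up ub zb"
    and L_def: "L = (SUP x. deriv (ign EA uig) (ub x) * zb x)"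
    and M_def: "M = (SUP x. (1 + q) * deriv (ign EA uig) (ub x) * zb x - ign EA uig (ub x))"
    and w: "H2_with w w1 w2" and z: "H2_with z z1 z2"
    and eq_w: "\<And>x. lam * w x - (1 - of_real (ub x)) * w1 x
      = of_real (q * ub x) * z x + of_real (q * (D - 1)) * z1 x + w2 x"
    and eq_z: "\<And>x. lam * z x + of_real (k * (ign EA uig (ub x) - q * deriv (ign EA uig) (ub x) * zb x)) * z x
      = z1 x + of_real (k * deriv (ign EA uig) (ub x) * zb x) * w1 x + of_real D * z2 x"
  shows "(Re lam + \<bar>Im lam\<bar>) * L2_norm_sq w + L2_norm_sq w1
      \<le> 3/4 * L2_norm_sq w1 + 3 * L2_norm_sq w + (1/8 + \<bar>D - 1\<bar>\<^sup>2 / 4) * L2_norm_sq z"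
    and "(Re lam + \<bar>Im lam\<bar>) * L2_norm_sq z \<le> (k * M + 1 / (4 * D)) * L2_norm_sq z + k * L / 2 * L2_norm_sq w1"
proof -
  note profile = weak_det_profile_properties[OF q(1) k D ord(2,3) prof]
  obtain Z where Z: "\<And>x. zb x \<le> Z"
    using profile(6) by blast
  have [measurable]: "ub \<in> borel_measurable borel"
    using profile(1) by (rule borel_measurable_continuous_onI)
  have ub: "0 \<le> ub x" "ub x \<le> 1" for x
    using profile(3,4)[of x] ord by auto
  show "(Re lam + \<bar>Im lam\<bar>) * L2_norm_sq w + L2_norm_sq w1
      \<le> 3/4 * L2_norm_sq w1 + 3 * L2_norm_sq w + (1/8 + \<bar>D - 1\<bar>\<^sup>2 / 4) * L2_norm_sq z"
    by (rule w_energy_estimate_majda[OF w z _ ub q eq_w]) measurable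
  show "(Re lam + \<bar>Im lam\<bar>) * L2_norm_sq z \<le> (k * M + 1 / (4 * D)) * L2_norm_sq z + k * L / 2 * L2_norm_sq w1"
    by (rule z_energy_estimate[OF w z D ignition_coefficient_bounds[OF EA k q(1) profile(1,2,5) Z L_def M_def] eq_z])
qed

theorem proposition3p1:
  fixes q k D EA uig um up L M :: real
    and ub zb :: "real \<Rightarrow> real"
    and lam :: complex
  assumes q: "0 < q" "q \<le> 1/2"
    and k: "k > 0" and D: "D > 0" and EA: "EA > 0"
    and RH: "(up\<^sup>2 - um\<^sup>2) / 2 = up - um + q"
    and ord: "0 \<le> up" "up < uig" "uig < um" "um < 1"
    and prof: "weak_det_profile q k D EA uig um up ub zb"
    and L_def: "L = (SUP x. deriv (ign EA uig) (ub x) * zb x)"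
    and M_def: "M = (SUP x. (1 + q) * deriv (ign EA uig) (ub x) * zb x - ign EA uig (ub x))"
    and Lpos: "L > 0"
    and lam: "Re lam \<ge> 0"
    and eig: "\<exists>w w1 w2 z z1 z2.
               H2_with w w1 w2 \<and> H2_with z z1 z2 \<and> (\<exists>x. w x \<noteq> 0 \<or> z x \<noteq> 0) \<and>
               (\<forall>x. lam * w x - (1 - of_real (ub x)) * w1 x
                     = of_real (q * ub x) * z x + of_real (q * (D - 1)) * z1 x + w2 x) \<and>
               (\<forall>x. lam * z x + of_real (k * (ign EA uig (ub x) - q * deriv (ign EA uig) (ub x) * zb x)) * z x
                     = z1 x + of_real (k * deriv (ign EA uig) (ub x) * zb x) * w1 x + of_real D * z2 x)"
  shows "Re lam + \<bar>Im lam\<bar> \<le> max 3 (1 / (4 * D) + (1/4 + 1/2 * \<bar>D - 1\<bar>\<^sup>2) * k * L + k * M)"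
proof (rule ccontr)
  assume "\<not> Re lam + \<bar>Im lam\<bar> \<le> max 3 (1 / (4 * D) + (1/4 + 1/2 * \<bar>D - 1\<bar>\<^sup>2) * k * L + k * M)"
  then have large: "3 < Re lam + \<bar>Im lam\<bar>"
    "1 / (4 * D) + (1/4 + 1/2 * \<bar>D - 1\<bar>\<^sup>2) * k * L + k * M < Re lam + \<bar>Im lam\<bar>"
    by simp_all
  obtain w w1 w2 z z1 z2 where w: "H2_with w w1 w2" and z: "H2_with z z1 z2"
    and nontrivial: "\<exists>x. w x \<noteq> 0 \<or> z x \<noteq> 0" and eq_w: "\<And>x. lam * w x - (1 - of_real (ub x)) * w1 x
      = of_real (q * ub x) * z x + of_real (q * (D - 1)) * z1 x + w2 x"
    and eq_z: "\<And>x. lam * z x + of_real (k * (ign EA uig (ub x) - q * deriv (ign EA uig) (ub x) * zb x)) * z x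
      = z1 x + of_real (k * deriv (ign EA uig) (ub x) * zb x) * w1 x + of_real D * z2 x"
    using eig by blast
  have "up < um"
    using ord by linarith
  note estimates = eigenfunction_energy_estimates[OF q k D EA ord(1) this ord(4) prof L_def M_def w z eq_w eq_z]
  have zero: "L2_norm_sq w = 0 \<and> L2_norm_sq z = 0"
  proof (rule energy_estimates_force_zero[OF estimates])
    have "k * M + 1 / (4 * D) + 2 * (1/8 + \<bar>D - 1\<bar>\<^sup>2 / 4) * (k * L)
      = 1 / (4 * D) + (1/4 + 1/2 * \<bar>D - 1\<bar>\<^sup>2) * k * L + k * M"
      by (simp add: algebra_simps)
    then show "k * M + 1 / (4 * D) + 2 * (1/8 + \<bar>D - 1\<bar>\<^sup>2 / 4) * (k * L) < Re lam + \<bar>Im lam\<bar>"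
      using large(2) by linarith
  qed (use large(1) k Lpos in \<open>auto intro: integral_nonneg_AE\<close>)
  have "w x = 0" "z x = 0" for x
    using L2_norm_sq_eq_0_imp_eq_0[OF H2_withD(6,3)[OF w]] L2_norm_sq_eq_0_imp_eq_0[OF H2_withD(6,3)[OF z]] zero
    by blast+
  then show False
    using nontrivial by blast
qed

end
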